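(* Assume (NC), and that $W,Z,U$ are discrete with finitely many values $w_1,\dots,w_{|\mathcal W|}$, $z_1,\dots,z_{|\mathcal Z|}$, $u_1,\dots,u_{|\mathcal U|}$. Suppose that for every $a\in\mathcal A$, $x\in\mathcal X$, the matrices $P(\mathbf W\mid\mathbf U,a,x)\in\mathbb R^{|\mathcal W|\times|\mathcal U|}$, $P(\mathbf U\mid\mathbf W,a,x)\in\mathbb R^{|\mathcal U|\times|\mathcal W|}$, $P(\mathbf Z\mid\mathbf U,a,x)\in\mathbb R^{|\mathcal Z|\times|\mathcal U|}$, $P(\mathbf U\mid\mathbf Z,a,x)\in\mathbb R^{|\mathcal U|\times|\mathcal Z|}$ all have rank $|\mathcal U|$. (1) If for every $g\in L_2(W,A,X)$, $\mathbb E[g(W,A,X)\mid Z,A,X]=0$ implies $g=0$, then $|\mathcal Z|\ge|\mathcal W|=|\mathcal U|$. (2) If for every $g\in L_2(Z,A,X)$, $\mathbb E[g(Z,A,X)\mid W,A,X]=0$ implies $g=0$, then $|\mathcal W|\ge|\mathcal Z|=|\mathcal U|$.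
   Context: Setup: random variables $(U,X,A,Z,W,Y)$ with $X$ observed covariates, $A\in\mathcal A$ an action ($\mathcal A$ carries a base measure $\mu$), $Z$ a negative control action, $W$ a negative control outcome, $Y$ real outcome, $U$ an unobserved confounder; potential outcomes $Y(a),Y(a,z),W(a,z)$; $\pi(a\mid x)$ a given real contrast function, $f(a\mid u,x)$ the conditional density of $A$ given $(U,X)$. Assumption (NC): (i) $Y=Y(A,Z)$, $W=W(A,Z)$; (ii) $Y(a,z)=Y(a)$; (iii) $W(a,z)=W$; (iv) $(Z,A)\perp(Y(a),W)\mid(U,X)$ for all $a$; (v) $|\pi(a\mid x)/f(a\mid x,u)|<\infty$. Matrix notation: $P(\mathbf W\mid\mathbf U,a,x)$ has $(i,s)$ entry $\Pr(W=w_i\mid U=u_s,A=a,X=x)$; $P(\mathbf U\mid\mathbf W,a,x)$ has $(s,i)$ entry $\Pr(U=u_s\mid W=w_i,A=a,X=x)$; $P(\mathbf Z\mid\mathbf U,a,x)$ and $P(\mathbf U\mid\mathbf Z,a,x)$ are defined analogously. *)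

theory Defs
  imports "HOL-Analysis.Analysis"
begin

text \<open>The (finite) value sets of U, Z, W are the
finite types 'u, 'z, 'w.  The joint density of (U,A,Z,W) given X = x, with respect to
counting measure on U, Z, W and the base measure mu on the action space, is
  pU x u * fAZ u x a z * hW u x w,
i.e. U | X has pmf pU, (A,Z) | (U,X) has density fAZ, and W | (U,X) has pmf hW,
the factorisation being the conditional independence (Z,A) indep W given (U,X)
of (NC)(iv) together with W = W(A,Z) = W of (NC)(i),(iii).\<close>

definition jdens ::
  "('x \<Rightarrow> 'u \<Rightarrow> real) \<Rightarrow> ('u \<Rightarrow> 'x \<Rightarrow> 'a \<Rightarrow> 'z \<Rightarrow> real) \<Rightarrow> ('u \<Rightarrow> 'x \<Rightarrow> 'w \<Rightarrow> real)
   \<Rightarrow> 'a \<Rightarrow> 'x \<Rightarrow> 'u \<Rightarrow> 'z \<Rightarrow> 'w \<Rightarrow> real" where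
  "jdens pU fAZ hW a x u z w = pU x u * fAZ u x a z * hW u x w"

text \<open>Unnormalised marginals (given A = a, X = x); all conditional probabilities
below are ratios, so the normalising constant p(a|x) cancels.\<close>

definition mUW :: "('a \<Rightarrow> 'x \<Rightarrow> 'u \<Rightarrow> 'z::finite \<Rightarrow> 'w \<Rightarrow> real) \<Rightarrow> 'a \<Rightarrow> 'x \<Rightarrow> 'u \<Rightarrow> 'w \<Rightarrow> real" where
  "mUW q a x u w = (\<Sum>z\<in>UNIV. q a x u z w)"
definition mUZ :: "('a \<Rightarrow> 'x \<Rightarrow> 'u \<Rightarrow> 'z \<Rightarrow> 'w::finite \<Rightarrow> real) \<Rightarrow> 'a \<Rightarrow> 'x \<Rightarrow> 'u \<Rightarrow> 'z \<Rightarrow> real" where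
  "mUZ q a x u z = (\<Sum>w\<in>UNIV. q a x u z w)"
definition mZW :: "('a \<Rightarrow> 'x \<Rightarrow> 'u::finite \<Rightarrow> 'z \<Rightarrow> 'w \<Rightarrow> real) \<Rightarrow> 'a \<Rightarrow> 'x \<Rightarrow> 'z \<Rightarrow> 'w \<Rightarrow> real" where
  "mZW q a x z w = (\<Sum>u\<in>UNIV. q a x u z w)"
definition mU :: "('a \<Rightarrow> 'x \<Rightarrow> 'u \<Rightarrow> 'z::finite \<Rightarrow> 'w::finite \<Rightarrow> real) \<Rightarrow> 'a \<Rightarrow> 'x \<Rightarrow> 'u \<Rightarrow> real" where
  "mU q a x u = (\<Sum>z\<in>UNIV. \<Sum>w\<in>UNIV. q a x u z w)"
definition mW :: "('a \<Rightarrow> 'x \<Rightarrow> 'u::finite \<Rightarrow> 'z::finite \<Rightarrow> 'w \<Rightarrow> real) \<Rightarrow> 'a \<Rightarrow> 'x \<Rightarrow> 'w \<Rightarrow> real" where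
  "mW q a x w = (\<Sum>u\<in>UNIV. \<Sum>z\<in>UNIV. q a x u z w)"
definition mZ :: "('a \<Rightarrow> 'x \<Rightarrow> 'u::finite \<Rightarrow> 'z \<Rightarrow> 'w::finite \<Rightarrow> real) \<Rightarrow> 'a \<Rightarrow> 'x \<Rightarrow> 'z \<Rightarrow> real" where
  "mZ q a x z = (\<Sum>u\<in>UNIV. \<Sum>w\<in>UNIV. q a x u z w)"

definition P_W_U :: "('a \<Rightarrow> 'x \<Rightarrow> 'u::finite \<Rightarrow> 'z::finite \<Rightarrow> 'w::finite \<Rightarrow> real) \<Rightarrow> 'a \<Rightarrow> 'x \<Rightarrow> real^'u^'w" where
  "P_W_U q a x = (\<chi> w u. mUW q a x u w / mU q a x u)"
definition P_U_W :: "('a \<Rightarrow> 'x \<Rightarrow> 'u::finite \<Rightarrow> 'z::finite \<Rightarrow> 'w::finite \<Rightarrow> real) \<Rightarrow> 'a \<Rightarrow> 'x \<Rightarrow> real^'w^'u" where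
  "P_U_W q a x = (\<chi> u w. mUW q a x u w / mW q a x w)"
definition P_Z_U :: "('a \<Rightarrow> 'x \<Rightarrow> 'u::finite \<Rightarrow> 'z::finite \<Rightarrow> 'w::finite \<Rightarrow> real) \<Rightarrow> 'a \<Rightarrow> 'x \<Rightarrow> real^'u^'z" where
  "P_Z_U q a x = (\<chi> z u. mUZ q a x u z / mU q a x u)"
definition P_U_Z :: "('a \<Rightarrow> 'x \<Rightarrow> 'u::finite \<Rightarrow> 'z::finite \<Rightarrow> 'w::finite \<Rightarrow> real) \<Rightarrow> 'a \<Rightarrow> 'x \<Rightarrow> real^'z^'u" where
  "P_U_Z q a x = (\<chi> u z. mUZ q a x u z / mZ q a x z)"

text \<open>Completeness: E[g(W,A,X) | Z,A,X] = 0 a.s. implies g = 0 a.s., written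
pointwise in (a,x) (discrete W, Z).\<close>

definition complete_W_given_Z :: "('a \<Rightarrow> 'x \<Rightarrow> 'u::finite \<Rightarrow> 'z::finite \<Rightarrow> 'w::finite \<Rightarrow> real) \<Rightarrow> bool" where
  "complete_W_given_Z q \<longleftrightarrow> (\<forall>a x. \<forall>g :: 'w \<Rightarrow> real.
     (\<forall>z. mZ q a x z > 0 \<longrightarrow> (\<Sum>w\<in>UNIV. g w * (mZW q a x z w / mZ q a x z)) = 0)
     \<longrightarrow> (\<forall>w. mW q a x w > 0 \<longrightarrow> g w = 0))"

definition complete_Z_given_W :: "('a \<Rightarrow> 'x \<Rightarrow> 'u::finite \<Rightarrow> 'z::finite \<Rightarrow> 'w::finite \<Rightarrow> real) \<Rightarrow> bool" where
  "complete_Z_given_W q \<longleftrightarrow> (\<forall>a x. \<forall>g :: 'z \<Rightarrow> real.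
     (\<forall>w. mW q a x w > 0 \<longrightarrow> (\<Sum>z\<in>UNIV. g z * (mZW q a x z w / mW q a x w)) = 0)
     \<longrightarrow> (\<forall>z. mZ q a x z > 0 \<longrightarrow> g z = 0))"

end

theory Submission
  imports Defs
begin

text \<open>Given A = a and X = x, the unnormalised joint law of (Z, W) factors through U as
  Q = F H,  with  F(z,u) = p(u) f(a,z|u)  and  H(u,w) = p(w|u).
Completeness of W given Z says that Q has trivial right kernel; then so does H, whence
|W| \<le> |U|, and |W| \<le> |Z| because Q is |Z| by |W|.  The rank condition on P(W|U) gives
|U| \<le> |W|.  Completeness of Z given W is the same argument for the transpose of Q.\<close>

lemma card_le_card_if_matrix_kernel_trivial:
  fixes M :: "real^'n^'m"
  assumes "\<And>g. M *v g = 0 \<Longrightarrow> g = 0"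
  shows "CARD('n) \<le> CARD('m)"
proof -
  have "inj ((*v) M)"
    using assms by (simp add: linear_inj_iff_eq_0)
  then have "rank M = CARD('n)"
    by (simp add: full_rank_injective)
  then show ?thesis
    using rank_bound[of M] by simp
qed

lemma card_le_inner_dims_if_matrix_mul_kernel_trivial:
  fixes A :: "real^'k^'m" and B :: "real^'n^'k"
  assumes "\<And>g. (A ** B) *v g = 0 \<Longrightarrow> g = 0"
  shows "CARD('n) \<le> CARD('k) \<and> CARD('n) \<le> CARD('m)"
proof -
  have "B *v g = 0 \<Longrightarrow> g = 0" for g
    using assms[of g] by (simp add: matrix_vector_mul_assoc[symmetric])
  then show ?thesis
    using card_le_card_if_matrix_kernel_trivial[of B]
      card_le_card_if_matrix_kernel_trivial[of "A ** B"] assms by blast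
qed

lemma mZW_jdens_eq_matrix_mul:
  "(\<chi> z w. mZW (jdens pU fAZ hW) a x z w)
     = (\<chi> z u. pU x u * fAZ u x a z) ** (\<chi> u w. hW u x w)"
  by (simp add: vec_eq_iff matrix_matrix_mult_def mZW_def jdens_def)

lemma complete_W_given_Z_kernel_trivial:
  assumes "complete_W_given_Z q" and "\<And>w. mW q a x w > 0"
    and "(\<chi> z w. mZW q a x z w) *v g = 0"
  shows "g = 0"
proof -
  have "(\<Sum>w\<in>UNIV. g $ w * (mZW q a x z w / mZ q a x z)) = 0" for z
    using assms(3)
    by (simp add: vec_eq_iff matrix_vector_mult_def sum_divide_distrib[symmetric] mult_ac)
  then show ?thesis
    using assms(1,2) unfolding complete_W_given_Z_def vec_eq_iff
    by (metis zero_index)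
qed

lemma complete_Z_given_W_kernel_trivial:
  assumes "complete_Z_given_W q" and "\<And>z. mZ q a x z > 0"
    and "transpose (\<chi> z w. mZW q a x z w) *v g = 0"
  shows "g = 0"
proof -
  have "(\<Sum>z\<in>UNIV. g $ z * (mZW q a x z w / mW q a x w)) = 0" for w
    using assms(3)
    by (simp add: vec_eq_iff matrix_vector_mult_def transpose_def
        sum_divide_distrib[symmetric] mult_ac)
  then show ?thesis
    using assms(1,2) unfolding complete_Z_given_W_def vec_eq_iff
    by (metis zero_index)
qed

theorem mainTheorem17:
  fixes pU :: "'x \<Rightarrow> 'u::finite \<Rightarrow> real"
    and fAZ :: "'u \<Rightarrow> 'x \<Rightarrow> 'a \<Rightarrow> 'z::finite \<Rightarrow> real"
    and hW :: "'u \<Rightarrow> 'x \<Rightarrow> 'w::finite \<Rightarrow> real"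
    and \<pi> :: "'a \<Rightarrow> 'x \<Rightarrow> real"
  assumes pU_nonneg: "\<And>x u. pU x u \<ge> 0" and pU_sum: "\<And>x. (\<Sum>u\<in>UNIV. pU x u) = 1"
    and fAZ_nonneg: "\<And>u x a z. fAZ u x a z \<ge> 0"
    and hW_nonneg: "\<And>u x w. hW u x w \<ge> 0" and hW_sum: "\<And>u x. (\<Sum>w\<in>UNIV. hW u x w) = 1"
    and positivity: "\<And>a x u. \<pi> a x \<noteq> 0 \<Longrightarrow> (\<Sum>z\<in>UNIV. fAZ u x a z) > 0"
    and W_support: "\<And>a x w. mW (jdens pU fAZ hW) a x w > 0"
    and Z_support: "\<And>a x z. mZ (jdens pU fAZ hW) a x z > 0"
    and rank_WU: "\<And>a x. rank (P_W_U (jdens pU fAZ hW) a x) = CARD('u)"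
    and rank_UW: "\<And>a x. rank (P_U_W (jdens pU fAZ hW) a x) = CARD('u)"
    and rank_ZU: "\<And>a x. rank (P_Z_U (jdens pU fAZ hW) a x) = CARD('u)"
    and rank_UZ: "\<And>a x. rank (P_U_Z (jdens pU fAZ hW) a x) = CARD('u)"
  shows "(complete_W_given_Z (jdens pU fAZ hW) \<longrightarrow> CARD('z) \<ge> CARD('w) \<and> CARD('w) = CARD('u))
       \<and> (complete_Z_given_W (jdens pU fAZ hW) \<longrightarrow> CARD('w) \<ge> CARD('z) \<and> CARD('z) = CARD('u))"
proof -
  fix a :: 'a and x :: 'x
  define F :: "real^'u^'z" where "F = (\<chi> z u. pU x u * fAZ u x a z)"
  define H :: "real^'w^'u" where "H = (\<chi> u w. hW u x w)"
  have Q_eq: "(\<chi> z w. mZW (jdens pU fAZ hW) a x z w) = F ** H"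
    unfolding F_def H_def by (rule mZW_jdens_eq_matrix_mul)
  have "CARD('u) \<le> CARD('w)" "CARD('u) \<le> CARD('z)"
    using rank_bound[of "P_W_U (jdens pU fAZ hW) a x"] rank_bound[of "P_Z_U (jdens pU fAZ hW) a x"]
      rank_WU rank_ZU by simp_all
  moreover have "CARD('w) \<le> CARD('u) \<and> CARD('w) \<le> CARD('z)"
    if "complete_W_given_Z (jdens pU fAZ hW)"
    by (rule card_le_inner_dims_if_matrix_mul_kernel_trivial,
        rule complete_W_given_Z_kernel_trivial[OF that W_support[of a x], unfolded Q_eq])
  moreover have "CARD('z) \<le> CARD('u) \<and> CARD('z) \<le> CARD('w)"
    if "complete_Z_given_W (jdens pU fAZ hW)"
    by (rule card_le_inner_dims_if_matrix_mul_kernel_trivial,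
        rule complete_Z_given_W_kernel_trivial[OF that Z_support[of a x], unfolded Q_eq matrix_transpose_mul])
  ultimately show ?thesis by auto
qed

end
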